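(* Let $k<n$ and $\phi(k)<m<2n$. Then the value in $U_q^+(\mathfrak{so}_{2n})$ of the bracketed word $[x_k\,x_{k+1}\cdots x_{n-2}\,x_n\,y_m]$, where $y_m=e[n+1,m]=[x_{n+1},[x_{n+2},[\dots,[x_{m-1},x_m]\dots]]]$, does not depend on the arrangement of the (skew) brackets on the sequence $x_k,\dots,x_{n-2},x_n,y_m$.
   Context: Let $\mathbf{k}$ be a field, $G$ an abelian group, $n\ge3$, $X=\{x_1,\dots,x_n\}$, $g_i\in G$, characters $\chi^i:G\to\mathbf{k}^*$, $p_{ij}=\chi^i(g_j)$; for homogeneous $u,v$, $p(u,v)=\chi^u(g_v)$ (replace $x_i$ by $g_i$, resp. $\chi^i$). $G\langle X\rangle$: skew group algebra with $x_ig=\chi^i(g)gx_i$; skew bracket $[u,v]=uv-p(u,v)vu$. Fix $q\in\mathbf{k}^*$, $q\ne-1$; assume $p_{ii}=q$ ($1\le i\le n$), $p_{i,i-1}p_{i-1,i}=q^{-1}$ ($1<i<n$), $p_{n-2,n}p_{n,n-2}=q^{-1}$, $p_{n-1,n}p_{n,n-1}=1$, $p_{ij}p_{ji}=1$ for all other $i<j$ with $j>i+1$. $U_q^+(\mathfrak{so}_{2n})$ is the quotient of $G\langle X\rangle$ by the ideal generated by $[x_i,[x_i,x_{i+1}]]$, $[[x_i,x_{i+1}],x_{i+1}]$ ($1\le i\le n-2$), $[x_{n-2},[x_{n-2},x_n]]$, $[[x_{n-2},x_n],x_n]$, $[x_i,x_j]$ ($1\le i<j\le n-1$, $j>i+1$),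 $[x_i,x_n]$ ($i\le n-3$), $[x_{n-1},x_n]$. For $n<i<2n$, $x_i:=x_{2n-i}$; $\phi(i)=2n-i$. (When $k=n-1$ the sequence is $x_n,y_m$.) *)

theory Defs
  imports "HOL-Library.Poly_Mapping"
begin

datatype word = Word "nat list"

instantiation word :: monoid_add
begin
definition zero_word_def: "0 = Word []"
fun plus_word :: "word \<Rightarrow> word \<Rightarrow> word" where
  "plus_word (Word u) (Word v) = Word (u @ v)"
instance
proof
  fix a b c :: word
  show "a + b + c = a + (b + c)" by (cases a; cases b; cases c) simp
  show "0 + a = a" by (cases a) (simp add: zero_word_def)
  show "a + 0 = a" by (cases a) (simp add: zero_word_def)
qed
end

text \<open>Elements of the free algebra k<X>: finitely supported k-linear combinations of words,
  with the convolution (concatenation) product.\<close>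
type_synonym 'k falg = "word \<Rightarrow>\<^sub>0 'k"

definition gen :: "nat \<Rightarrow> 'k::field falg" where
  "gen i = Poly_Mapping.single (Word [i]) 1"

definition scal :: "'k::field \<Rightarrow> 'k falg" where
  "scal c = Poly_Mapping.single (Word []) c"

datatype 'a btree = Lf 'a | Nd "'a btree" "'a btree"

fun leaves :: "'a btree \<Rightarrow> 'a list" where
  "leaves (Lf a) = [a]"
| "leaves (Nd s t) = leaves s @ leaves t"

text \<open>Multidegree (as a list of generator indices) of a bracketed word whose atoms have
  multidegrees given by d.\<close>
definition bdeg :: "('a \<Rightarrow> nat list) \<Rightarrow> 'a btree \<Rightarrow> nat list" where
  "bdeg d t = concat (map d (leaves t))"

text \<open>p(u,v) = chi^u(g_v) for homogeneous u, v with letter lists u, v (bimultiplicativity).\<close>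
definition pp :: "(nat \<Rightarrow> nat \<Rightarrow> 'k::field) \<Rightarrow> nat list \<Rightarrow> nat list \<Rightarrow> 'k" where
  "pp p u v = (\<Prod>a\<leftarrow>u. \<Prod>b\<leftarrow>v. p a b)"

fun beval :: "(nat \<Rightarrow> nat \<Rightarrow> 'k::field) \<Rightarrow> ('a \<Rightarrow> 'k falg) \<Rightarrow> ('a \<Rightarrow> nat list)
              \<Rightarrow> 'a btree \<Rightarrow> 'k falg" where
  "beval p f d (Lf a) = f a"
| "beval p f d (Nd s t) =
     beval p f d s * beval p f d t
     - scal (pp p (bdeg d s) (bdeg d t)) * beval p f d t * beval p f d s"

abbreviation xeval :: "(nat \<Rightarrow> nat \<Rightarrow> 'k::field) \<Rightarrow> nat btree \<Rightarrow> 'k falg" where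
  "xeval p t \<equiv> beval p gen (\<lambda>i. [i]) t"

fun rcomb :: "'a \<Rightarrow> 'a list \<Rightarrow> 'a btree" where
  "rcomb a [] = Lf a"
| "rcomb a (b # bs) = Nd (Lf a) (rcomb b bs)"

inductive_set tideal :: "'r::ring set \<Rightarrow> 'r set" for S where
  gen_in: "s \<in> S \<Longrightarrow> s \<in> tideal S"
| zero_in: "0 \<in> tideal S"
| add_in: "a \<in> tideal S \<Longrightarrow> b \<in> tideal S \<Longrightarrow> a + b \<in> tideal S"
| mult_in: "a \<in> tideal S \<Longrightarrow> u * a * v \<in> tideal S"

definition so_rels :: "(nat \<Rightarrow> nat \<Rightarrow> 'k::field) \<Rightarrow> nat \<Rightarrow> 'k falg set" where
  "so_rels p n =
     {xeval p (Nd (Lf i) (Nd (Lf i) (Lf (i+1)))) | i. 1 \<le> i \<and> i \<le> n - 2}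
   \<union> {xeval p (Nd (Nd (Lf i) (Lf (i+1))) (Lf (i+1))) | i. 1 \<le> i \<and> i \<le> n - 2}
   \<union> {xeval p (Nd (Lf (n-2)) (Nd (Lf (n-2)) (Lf n))),
      xeval p (Nd (Nd (Lf (n-2)) (Lf n)) (Lf n))}
   \<union> {xeval p (Nd (Lf i) (Lf j)) | i j. 1 \<le> i \<and> i < j \<and> j \<le> n - 1 \<and> i + 1 < j}
   \<union> {xeval p (Nd (Lf i) (Lf n)) | i. 1 \<le> i \<and> i \<le> n - 3}
   \<union> {xeval p (Nd (Lf (n-1)) (Lf n))}"

definition Ueq :: "(nat \<Rightarrow> nat \<Rightarrow> 'k::field) \<Rightarrow> nat \<Rightarrow> 'k falg \<Rightarrow> 'k falg \<Rightarrow> bool" where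
  "Ueq p n a b \<longleftrightarrow> a - b \<in> tideal (so_rels p n)"

definition phi :: "nat \<Rightarrow> nat \<Rightarrow> nat" where
  "phi n i = 2*n - i"

text \<open>Index of the generator denoted x_i (x_i = x_{phi i} for i > n).\<close>
definition xidx :: "nat \<Rightarrow> nat \<Rightarrow> nat" where
  "xidx n i = (if i \<le> n then i else 2*n - i)"

definition ym :: "(nat \<Rightarrow> nat \<Rightarrow> 'k::field) \<Rightarrow> nat \<Rightarrow> nat \<Rightarrow> 'k falg" where
  "ym p n m = beval p (\<lambda>i. gen (xidx n i)) (\<lambda>i. [xidx n i]) (rcomb (n+1) [n+2..<m+1])"

text \<open>Atoms of the sequence x_k,...,x_{n-2},x_n,y_m: Some i stands for x_i, None for y_m.\<close>
definition atom_val :: "(nat \<Rightarrow> nat \<Rightarrow> 'k::field) \<Rightarrow> nat \<Rightarrow> nat \<Rightarrow> nat option \<Rightarrow> 'k falg" where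
  "atom_val p n m a = (case a of Some i \<Rightarrow> gen i | None \<Rightarrow> ym p n m)"

definition atom_deg :: "nat \<Rightarrow> nat \<Rightarrow> nat option \<Rightarrow> nat list" where
  "atom_deg n m a = (case a of Some i \<Rightarrow> [i] | None \<Rightarrow> map (xidx n) [n+1..<m+1])"

definition the_seq :: "nat \<Rightarrow> nat \<Rightarrow> nat option list" where
  "the_seq n k = map Some [k..<n-1] @ [Some n, None]"

end

theory Submission
  imports Defs
begin

(* If every letter of a sequence skew-commutes, modulo an ideal, with every later letter except
   its immediate successor, then all bracketings of the sequence agree modulo that ideal with the
   right-normed one: the deformed Jacobi identity
     [[u,v],w] - [u,[v,w]] = p(v,w) [u,w] v - p(u,v) v [u,w]
   allows reassociating whenever [u,w] vanishes.  The sequence x_k, ..., x_{n-2}, x_n, y_m has this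
   property.  Distant letters x_i commute by the defining relations, and
   y_m = [x_{n-1},[x_{n-2},...,[x_{l+1},x_l]]] with l = 2n - m skew-commutes with x_i for
   l < i <= n-2, because [x_i,[x_{i+1},[x_i,x_{i-1}]]] lies in the ideal generated by the quantum
   Serre relations and [x_{i-1},x_{i+1}]. *)

lemma scal_eq_single: "scal c = Poly_Mapping.single 0 c"
  by (simp add: scal_def zero_word_def)

lemma scal_mult: "scal a * scal b = scal (a * b)"
  by (simp add: scal_eq_single mult_single)

lemma scal_1 [simp]: "scal 1 = 1"
  by (simp add: scal_eq_single)

lemma scal_commute: "scal c * x = x * (scal c :: 'k::field falg)"
proof (induction x rule: update_induct)
  case const
  then show ?case by simp
next
  case (update x w a)
  then have "Poly_Mapping.update w a x = x + Poly_Mapping.single w a"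
    by (intro poly_mapping_eqI)
      (auto simp: lookup_update lookup_add lookup_single when_def in_keys_iff)
  with update show ?case
    by (simp add: distrib_left distrib_right scal_eq_single mult_single mult.commute)
qed

lemma mult_scal_left_commute: "x * (scal c * y) = scal c * (x * (y :: 'k::field falg))"
  by (metis mult.assoc scal_commute)

definition skew_bracket ::
  "(nat \<Rightarrow> nat \<Rightarrow> 'k::field) \<Rightarrow> nat list \<Rightarrow> nat list \<Rightarrow> 'k falg \<Rightarrow> 'k falg \<Rightarrow> 'k falg" where
  "skew_bracket p du dv u v = u * v - scal (pp p du dv) * v * u"

lemma pp_append_left: "pp p (u @ v) w = pp p u w * pp p v w"
  unfolding pp_def by (induction u) (simp_all add: mult_ac)

lemma pp_append_right: "pp p u (v @ w) = pp p u v * pp p u w"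
  unfolding pp_def by (induction u) (simp_all add: mult_ac)

lemma skew_bracket_assoc_defect:
  "skew_bracket p (du @ dv) dw (skew_bracket p du dv u v) w
     - skew_bracket p du (dv @ dw) u (skew_bracket p dv dw v w)
   = scal (pp p dv dw) * (skew_bracket p du dw u w * v)
     - scal (pp p du dv) * (v * skew_bracket p du dw u w)"
proof -
  have [simp]: "NO_MATCH (scal a) x \<Longrightarrow> x * (scal c * y) = scal c * (x * y)"
    for a c and x y :: "'k::field falg"
    by (rule mult_scal_left_commute)
  have [simp]: "scal a * (scal b * x) = scal (a * b) * x" for a b and x :: "'k::field falg"
    by (simp add: mult.assoc[symmetric] scal_mult)
  show ?thesis
    by (simp add: skew_bracket_def pp_append_left pp_append_right ring_distribs mult.assoc
        mult_ac algebra_simps)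
qed

lemma tideal_mult_left: "a \<in> tideal I \<Longrightarrow> u * a \<in> tideal (I :: 'r::ring_1 set)"
  using tideal.mult_in[of a I u 1] by simp

lemma tideal_mult_right: "a \<in> tideal I \<Longrightarrow> a * v \<in> tideal (I :: 'r::ring_1 set)"
  using tideal.mult_in[of a I 1 v] by simp

lemma tideal_diff: "a \<in> tideal I \<Longrightarrow> b \<in> tideal I \<Longrightarrow> a - b \<in> tideal (I :: 'r::ring_1 set)"
  using tideal.add_in[of a I "(-1) * b * 1"] tideal.mult_in[of b I "-1" 1] by simp

lemma tideal_diff_refl: "a - a \<in> tideal I"
  by (simp add: tideal.zero_in)

lemma tideal_diff_sym: "a - b \<in> tideal I \<Longrightarrow> b - a \<in> tideal (I :: 'r::ring_1 set)"
  using tideal_diff[OF tideal.zero_in] by fastforce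

lemma tideal_diff_trans:
  "a - b \<in> tideal I \<Longrightarrow> b - c \<in> tideal I \<Longrightarrow> a - c \<in> tideal (I :: 'r::ring_1 set)"
  using tideal.add_in[of "a - b" I "b - c"] by simp

lemma tideal_diff_memI: "a - b \<in> tideal I \<Longrightarrow> b \<in> tideal I \<Longrightarrow> a \<in> tideal (I :: 'r::ring_1 set)"
  using tideal.add_in[of "a - b" I b] by simp

lemma skew_bracket_in_tideal_left: "u \<in> tideal I \<Longrightarrow> skew_bracket p du dv u v \<in> tideal I"
  unfolding skew_bracket_def by (intro tideal_diff tideal_mult_left tideal_mult_right)

lemma skew_bracket_cong_tideal:
  assumes "u - u' \<in> tideal I" and "v - v' \<in> tideal I"
  shows "skew_bracket p du dv u v - skew_bracket p du dv u' v' \<in> tideal I"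
proof -
  have "skew_bracket p du dv u v - skew_bracket p du dv u' v'
      = ((u - u') * v + u' * (v - v')) - scal (pp p du dv) * ((v - v') * u + v' * (u - u'))"
    by (simp add: skew_bracket_def algebra_simps)
  also have "\<dots> \<in> tideal I"
  proof -
    have "(u - u') * v + u' * (v - v') \<in> tideal I" "(v - v') * u + v' * (u - u') \<in> tideal I"
      using assms by (blast intro: tideal.add_in tideal_mult_left tideal_mult_right)+
    then show ?thesis by (intro tideal_diff tideal_mult_left)
  qed
  finally show ?thesis .
qed

lemma skew_bracket_assoc_tideal:
  assumes "skew_bracket p du dw u w \<in> tideal I"
  shows "skew_bracket p (du @ dv) dw (skew_bracket p du dv u v) w
           - skew_bracket p du (dv @ dw) u (skew_bracket p dv dw v w) \<in> tideal I"
  unfolding skew_bracket_assoc_defect using assms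
  by (intro tideal_diff tideal_mult_left tideal_mult_right)

lemma skew_bracket_right_bracket_in_tideal:
  assumes "skew_bracket p du dv u v \<in> tideal I" and "skew_bracket p du dw u w \<in> tideal I"
  shows "skew_bracket p du (dv @ dw) u (skew_bracket p dv dw v w) \<in> tideal I"
  using tideal_diff_memI[OF tideal_diff_sym[OF skew_bracket_assoc_tideal[OF assms(2)]]
      skew_bracket_in_tideal_left[OF assms(1)]] .

lemma skew_bracket_antisym:
  assumes "pp p du dv * pp p dv du = 1"
  shows "skew_bracket p du dv u v = - scal (pp p du dv) * skew_bracket p dv du v u"
proof -
  have "scal (pp p du dv) * (scal (pp p dv du) * x) = x" for x
    using assms by (simp add: mult.assoc[symmetric] scal_mult)
  then show ?thesis
    by (simp add: skew_bracket_def ring_distribs mult.assoc)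
qed

lemma skew_bracket_in_tideal_swap:
  assumes "pp p du dv * pp p dv du = 1" and "skew_bracket p dv du v u \<in> tideal I"
  shows "skew_bracket p du dv u v \<in> tideal I"
  unfolding skew_bracket_antisym[OF assms(1)] mult.assoc using assms(2) by (rule tideal_mult_left)

lemma beval_Nd_skew_bracket [simp]:
  "beval p f d (Nd s t) = skew_bracket p (bdeg d s) (bdeg d t) (beval p f d s) (beval p f d t)"
  by (simp add: skew_bracket_def)

declare beval.simps(2) [simp del]

lemma bdeg_Lf [simp]: "bdeg d (Lf a) = d a"
  by (simp add: bdeg_def)

lemma bdeg_Nd [simp]: "bdeg d (Nd s t) = bdeg d s @ bdeg d t"
  by (simp add: bdeg_def)

lemma leaves_neq_Nil: "leaves t \<noteq> []"
  by (induction t) auto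

lemma leaves_rcomb: "leaves (rcomb a xs) = a # xs"
  by (induction xs arbitrary: a) auto

lemma bdeg_rcomb: "bdeg d (rcomb a xs) = concat (map d (a # xs))"
  by (simp add: bdeg_def leaves_rcomb)

fun far_related :: "('a \<Rightarrow> 'a \<Rightarrow> bool) \<Rightarrow> 'a list \<Rightarrow> bool" where
  "far_related R [] = True"
| "far_related R (x # xs) = ((\<forall>y\<in>set (tl xs). R x y) \<and> far_related R xs)"

lemma far_related_appendD:
  "far_related R (xs @ ys) \<Longrightarrow> far_related R xs \<and> far_related R ys"
proof (induction xs)
  case (Cons x xs)
  then show ?case by (cases xs) auto
qed simp

lemma far_related_of_rank:
  assumes "map r xs = [c..<c + length xs]"
    and "\<And>x y. x \<in> set xs \<Longrightarrow> y \<in> set xs \<Longrightarrow> r x + 1 < r y \<Longrightarrow> R x y"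
  shows "far_related R xs"
  using assms
proof (induction xs arbitrary: c)
  case (Cons x xs)
  have "[c..<c + length (x # xs)] = c # [Suc c..<Suc c + length xs]"
    by (simp add: upt_conv_Cons del: upt_Suc)
  with Cons.prems(1) have rx: "r x = c" and rxs: "map r xs = [Suc c..<Suc c + length xs]"
    by simp_all
  have "R x y" if y: "y \<in> set (tl xs)" for y
  proof -
    have "r y \<in> set (tl (map r xs))" using y by (simp add: map_tl[symmetric])
    then have "r x + 1 < r y"
      unfolding rxs rx by (cases xs) (simp_all add: upt_conv_Cons del: upt_Suc)
    moreover have "y \<in> set xs" using y by (cases xs) auto
    ultimately show ?thesis using Cons.prems(2) by simp
  qed
  moreover have "far_related R xs"
    using Cons.IH[OF rxs] Cons.prems(2) by simp
  ultimately show ?case by simp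
qed simp

lemma skew_bracket_beval_in_tideal:
  assumes "\<forall>y\<in>set (leaves t). skew_bracket p du (d y) u (f y) \<in> tideal I"
  shows "skew_bracket p du (bdeg d t) u (beval p f d t) \<in> tideal I"
  using assms by (induction t) (simp_all add: skew_bracket_right_bracket_in_tideal)

context
  fixes p :: "nat \<Rightarrow> nat \<Rightarrow> 'k::field" and f :: "'a \<Rightarrow> 'k falg" and d :: "'a \<Rightarrow> nat list"
    and I :: "'k falg set"
begin

definition skew_commute_mod :: "'a \<Rightarrow> 'a \<Rightarrow> bool" where
  "skew_commute_mod x y \<longleftrightarrow> skew_bracket p (d x) (d y) (f x) (f y) \<in> tideal I"

lemma skew_bracket_rcomb_tideal:
  assumes "far_related skew_commute_mod (a # as @ b # bs)"
  shows "skew_bracket p (bdeg d (rcomb a as)) (bdeg d (rcomb b bs))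
             (beval p f d (rcomb a as)) (beval p f d (rcomb b bs))
           - beval p f d (rcomb a (as @ b # bs)) \<in> tideal I"
  using assms
proof (induction as arbitrary: a)
  case Nil
  then show ?case by (simp add: tideal.zero_in)
next
  case (Cons a' as)
  let ?v = "beval p f d (rcomb a' as)" and ?dv = "bdeg d (rcomb a' as)"
  let ?w = "beval p f d (rcomb b bs)" and ?dw = "bdeg d (rcomb b bs)"
  have "skew_bracket p (d a) ?dw (f a) ?w \<in> tideal I"
    using Cons.prems
    by (intro skew_bracket_beval_in_tideal) (simp add: leaves_rcomb skew_commute_mod_def)
  then have "skew_bracket p (d a @ ?dv) ?dw (skew_bracket p (d a) ?dv (f a) ?v) ?w
      - skew_bracket p (d a) (?dv @ ?dw) (f a) (skew_bracket p ?dv ?dw ?v ?w) \<in> tideal I"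
    by (rule skew_bracket_assoc_tideal)
  moreover have "skew_bracket p (d a) (?dv @ ?dw) (f a) (skew_bracket p ?dv ?dw ?v ?w)
      - skew_bracket p (d a) (?dv @ ?dw) (f a) (beval p f d (rcomb a' (as @ b # bs))) \<in> tideal I"
    using Cons by (intro skew_bracket_cong_tideal tideal_diff_refl) simp
  ultimately show ?case
    by (simp add: bdeg_rcomb) (rule tideal_diff_trans)
qed

lemma beval_rcomb_tideal:
  "leaves t = a # as \<Longrightarrow> far_related skew_commute_mod (a # as)
     \<Longrightarrow> beval p f d t - beval p f d (rcomb a as) \<in> tideal I"
proof (induction t arbitrary: a as)
  case (Lf x)
  then show ?case by (simp add: tideal.zero_in)
next
  case (Nd s t)
  obtain a1 as1 where s: "leaves s = a1 # as1" using leaves_neq_Nil by (metis list.exhaust)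
  obtain b bs where t: "leaves t = b # bs" using leaves_neq_Nil by (metis list.exhaust)
  have a: "a1 = a" "as = as1 @ b # bs" using Nd.prems(1) s t by auto
  have far: "far_related skew_commute_mod ((a # as1) @ b # bs)"
    using Nd.prems(2) a by simp
  then have "far_related skew_commute_mod (a # as1)" "far_related skew_commute_mod (b # bs)"
    using far_related_appendD by blast+
  then have "beval p f d (Nd s t) - skew_bracket p (bdeg d (rcomb a as1)) (bdeg d (rcomb b bs))
      (beval p f d (rcomb a as1)) (beval p f d (rcomb b bs)) \<in> tideal I"
    using Nd.IH s t a by (simp add: bdeg_def leaves_rcomb skew_bracket_cong_tideal)
  moreover have "skew_bracket p (bdeg d (rcomb a as1)) (bdeg d (rcomb b bs))
      (beval p f d (rcomb a as1)) (beval p f d (rcomb b bs)) - beval p f d (rcomb a as) \<in> tideal I"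
    unfolding a(2) by (rule skew_bracket_rcomb_tideal) (use far in simp)
  ultimately show ?case by (rule tideal_diff_trans)
qed

theorem beval_bracketing_independent:
  assumes "leaves t1 = xs" and "leaves t2 = xs" and "far_related skew_commute_mod xs"
  shows "beval p f d t1 - beval p f d t2 \<in> tideal I"
proof -
  obtain a as where "xs = a # as" using assms(1) leaves_neq_Nil by (metis list.exhaust)
  with assms show ?thesis
    by (metis beval_rcomb_tideal tideal_diff_sym tideal_diff_trans)
qed

end

lemma bdeg_letters [simp]: "bdeg (\<lambda>i. [i]) t = leaves t"
  by (induction t) simp_all

lemma pp_singleton [simp]: "pp p [a] [b] = p a b"
  by (simp add: pp_def)

lemma leaves_map_btree: "leaves (map_btree h t) = map h (leaves t)"
  by (induction t) auto

lemma beval_rename_letters: "beval p (\<lambda>i. gen (h i)) (\<lambda>i. [h i]) t = xeval p (map_btree h t)"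
proof (induction t)
  case (Nd s t)
  have "bdeg (\<lambda>i. [h i]) u = leaves (map_btree h u)" for u
    by (simp add: bdeg_def leaves_map_btree comp_def)
  with Nd show ?case by simp
qed simp

lemma map_btree_rcomb: "map_btree h (rcomb a xs) = rcomb (h a) (map h xs)"
  by (induction xs arbitrary: a) auto

definition desc_word :: "nat \<Rightarrow> nat \<Rightarrow> nat btree" where
  "desc_word l j = rcomb j (rev [l..<j])"

lemma desc_word_Suc: "l \<le> j \<Longrightarrow> desc_word l (Suc j) = Nd (Lf (Suc j)) (desc_word l j)"
  by (simp add: desc_word_def)

lemma desc_word_self: "desc_word l l = Lf l"
  by (simp add: desc_word_def)

lemma leaves_desc_word: "leaves (desc_word l j) = j # rev [l..<j]"
  by (simp add: desc_word_def leaves_rcomb)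

(* [x_b,[x_c,[x_b,x_a]]] written as a two-sided combination of the Serre relations [[x_a,x_b],x_b],
   [x_b,[x_b,x_c]] and of [x_a,x_c]; the identity is checked by comparing the coefficients of the
   twelve words of multidegree a + 2b + c. *)

lemma triple_bracket_identity:
  fixes p :: "nat \<Rightarrow> nat \<Rightarrow> 'k::field"
  assumes dist: "a \<noteq> b" "b \<noteq> c" "a \<noteq> c"
    and qn: "q \<noteq> 0" "1 + q \<noteq> 0"
    and pa: "p a a = q" and pb: "p b b = q" and pc: "p c c = q"
    and hab: "p b a * p a b = inverse q" and hbc: "p c b * p b c = inverse q"
    and hac: "p a c * p c a = 1"
    and nz: "p a b \<noteq> 0" "p b c \<noteq> 0" "p a c \<noteq> 0"
    and rr: "r * (1 + q) = 1"
  shows "xeval p (Nd (Lf b) (Nd (Lf c) (Nd (Lf b) (Lf a)))) =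
     scal (- 1*r/(q^2*(p a b)^2*p b c*p a c)) * xeval p (Nd (Nd (Lf a) (Lf b)) (Lf b)) * gen c
   + scal (p b c*r/((p a b)^2)) * gen c * xeval p (Nd (Nd (Lf a) (Lf b)) (Lf b))
   + scal (-1*r/(p b c*p a c)) * gen b * gen b * xeval p (Nd (Lf a) (Lf c))
   + scal (1/(q*p a b*p a c)) * gen b * xeval p (Nd (Lf a) (Lf c)) * gen b
   + scal (-p b c*r/(q*(p a b)^2*p a c)) * xeval p (Nd (Lf a) (Lf c)) * gen b * gen b
   + scal (-1*r/(p b c)) * xeval p (Nd (Lf b) (Nd (Lf b) (Lf c))) * gen a
   + scal (1*r/(q^2*(p a b)^2*p b c*p a c)) * gen a * xeval p (Nd (Lf b) (Nd (Lf b) (Lf c)))"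
  (is "?l = ?r")
proof -
  have pba: "p b a = inverse q / p a b" using hab nz by (simp add: eq_divide_eq mult.commute)
  have pcb: "p c b = inverse q / p b c" using hbc nz by (simp add: eq_divide_eq mult.commute)
  have pca: "p c a = 1 / p a c" using hac nz by (simp add: eq_divide_eq mult.commute)
  have r_cancel: "r * x + q * (r * x) = x" for x
  proof -
    have "r * x + q * (r * x) = (r * (1 + q)) * x" by (simp add: algebra_simps)
    with rr show ?thesis by simp
  qed
  note expand = skew_bracket_def pp_def scal_eq_single gen_def mult_single ring_distribs
    lookup_add lookup_minus lookup_single when_def pba pcb pca pa pb pc
  have "Poly_Mapping.lookup ?l (Word w) = Poly_Mapping.lookup ?r (Word w)" for w
  proof (cases "w \<in> set [[a,b,b,c], [a,b,c,b], [a,c,b,b], [b,a,b,c], [b,a,c,b], [b,b,a,c],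
                         [b,b,c,a], [b,c,a,b], [b,c,b,a], [c,a,b,b], [c,b,a,b], [c,b,b,a]]")
    case True
    then show ?thesis
      using dist
      apply (simp only: set_simps insert_iff empty_iff)
      apply (elim disjE; (simp add: expand);
          (insert qn nz rr, simp add: field_simps power2_eq_square, algebra?, (simp add: r_cancel)?)?)
      done
  next
    case False
    then have "[a,b,b,c] \<noteq> w" "[a,b,c,b] \<noteq> w" "[a,c,b,b] \<noteq> w" "[b,a,b,c] \<noteq> w"
      "[b,a,c,b] \<noteq> w" "[b,b,a,c] \<noteq> w" "[b,b,c,a] \<noteq> w" "[b,c,a,b] \<noteq> w"
      "[b,c,b,a] \<noteq> w" "[c,a,b,b] \<noteq> w" "[c,b,a,b] \<noteq> w" "[c,b,b,a] \<noteq> w"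
      by auto
    then show ?thesis by (simp add: expand)
  qed
  then show ?thesis
    by (intro poly_mapping_eqI) (metis word.exhaust)
qed

lemma triple_bracket_in_tideal:
  fixes p :: "nat \<Rightarrow> nat \<Rightarrow> 'k::field"
  assumes "a \<noteq> b" "b \<noteq> c" "a \<noteq> c"
    and "q \<noteq> 0" "1 + q \<noteq> 0"
    and "p a a = q" "p b b = q" "p c c = q"
    and "p b a * p a b = inverse q" "p c b * p b c = inverse q" "p a c * p c a = 1"
    and "p a b \<noteq> 0" "p b c \<noteq> 0" "p a c \<noteq> 0"
    and serre_ab: "xeval p (Nd (Nd (Lf a) (Lf b)) (Lf b)) \<in> tideal I"
    and serre_bc: "xeval p (Nd (Lf b) (Nd (Lf b) (Lf c))) \<in> tideal I"
    and comm_ac: "xeval p (Nd (Lf a) (Lf c)) \<in> tideal I"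
  shows "xeval p (Nd (Lf b) (Nd (Lf c) (Nd (Lf b) (Lf a)))) \<in> tideal I"
proof -
  have "inverse (1 + q) * (1 + q) = 1" using \<open>1 + q \<noteq> 0\<close> by simp
  note identity = triple_bracket_identity[OF assms(1-14) this]
  show ?thesis
    unfolding identity mult.assoc
    by (intro tideal.add_in tideal_mult_left tideal_mult_right serre_ab serre_bc comm_ac)
qed

lemma nested_bracket_extend:
  assumes bz: "skew_bracket p db dz y z \<in> tideal I"
    and cz: "skew_bracket p dc dz w z \<in> tideal I"
    and core: "skew_bracket p db (dc @ db @ da) y
                 (skew_bracket p dc (db @ da) w (skew_bracket p db da y x)) \<in> tideal I"
  shows "skew_bracket p db (dc @ db @ da @ dz) y (skew_bracket p dc (db @ da @ dz) w
           (skew_bracket p db (da @ dz) y (skew_bracket p da dz x z))) \<in> tideal I"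
proof -
  (* Since y and w skew-commute with z, z can be pulled out of the nested bracket one level
     at a time. *)
  let ?yx = "skew_bracket p db da y x"
  let ?wyx = "skew_bracket p dc (db @ da) w ?yx"
  have s1: "skew_bracket p (db @ da) dz ?yx z
      - skew_bracket p db (da @ dz) y (skew_bracket p da dz x z) \<in> tideal I"
    using skew_bracket_assoc_tideal[OF bz] .
  have s2: "skew_bracket p (dc @ db @ da) dz ?wyx z
      - skew_bracket p dc (db @ da @ dz) w (skew_bracket p (db @ da) dz ?yx z) \<in> tideal I"
    using skew_bracket_assoc_tideal[OF cz, of "db @ da" ?yx] by simp
  have s3: "skew_bracket p (db @ dc @ db @ da) dz (skew_bracket p db (dc @ db @ da) y ?wyx) z
      - skew_bracket p db (dc @ db @ da @ dz) y (skew_bracket p (dc @ db @ da) dz ?wyx z)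
      \<in> tideal I"
    using skew_bracket_assoc_tideal[OF bz, of "dc @ db @ da" ?wyx] by simp
  have "skew_bracket p dc (db @ da @ dz) w (skew_bracket p db (da @ dz) y (skew_bracket p da dz x z))
      - skew_bracket p (dc @ db @ da) dz ?wyx z \<in> tideal I"
    using tideal_diff_trans[OF skew_bracket_cong_tideal[OF tideal_diff_refl tideal_diff_sym[OF s1]]
        tideal_diff_sym[OF s2]] .
  then have "skew_bracket p db (dc @ db @ da @ dz) y (skew_bracket p dc (db @ da @ dz) w
        (skew_bracket p db (da @ dz) y (skew_bracket p da dz x z)))
      - skew_bracket p (db @ dc @ db @ da) dz (skew_bracket p db (dc @ db @ da) y ?wyx) z \<in> tideal I"
    using tideal_diff_trans[OF skew_bracket_cong_tideal[OF tideal_diff_refl] tideal_diff_sym[OF s3]]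
    by blast
  then show ?thesis
    using skew_bracket_in_tideal_left[OF core] tideal_diff_memI by blast
qed

lemma map_xidx_upt:
  assumes "n + 1 < m" "m < 2*n"
  shows "map (xidx n) [n+2..<m+1] = rev [2*n-m..<n-1]"
proof (rule nth_equalityI)
  show "length (map (xidx n) [n+2..<m+1]) = length (rev [2*n-m..<n-1])"
    using assms by simp
next
  fix i assume "i < length (map (xidx n) [n+2..<m+1])"
  then have i: "i < m - n - 1" by (simp only: length_map length_upt)
  then have "map (xidx n) [n+2..<m+1] ! i = 2*n - (n + 2 + i)"
    by (simp add: xidx_def del: upt_Suc)
  moreover have "rev [2*n-m..<n-1] ! i = 2*n - m + (n - 1 - (2*n-m) - Suc i)"
    using i assms by (simp add: rev_nth)
  ultimately show "map (xidx n) [n+2..<m+1] ! i = rev [2*n-m..<n-1] ! i"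
    using i assms by simp
qed

lemma atom_val_Some [simp]: "atom_val p n m (Some i) = gen i"
  by (simp add: atom_val_def)

lemma atom_deg_Some [simp]: "atom_deg n m (Some i) = [i]"
  by (simp add: atom_deg_def)

lemma ym_eq_desc_word:
  assumes "n + 1 < m" "m < 2*n"
  shows "ym p n m = xeval p (desc_word (2*n-m) (n-1))"
proof -
  have "ym p n m = xeval p (map_btree (xidx n) (rcomb (n+1) [n+2..<m+1]))"
    unfolding ym_def by (rule beval_rename_letters)
  also have "\<dots> = xeval p (rcomb (n-1) (rev [2*n-m..<n-1]))"
    by (simp only: map_btree_rcomb map_xidx_upt[OF assms]) (simp add: xidx_def)
  finally show ?thesis by (simp add: desc_word_def)
qed

lemma atom_deg_ym:
  assumes "n + 1 < m" "m < 2*n"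
  shows "atom_deg n m None = leaves (desc_word (2*n-m) (n-1))"
proof -
  have "[n+1..<m+1] = (n+1) # [n+2..<m+1]" using assms by (simp add: upt_conv_Cons)
  then show ?thesis
    using map_xidx_upt[OF assms] by (simp add: atom_deg_def leaves_desc_word xidx_def)
qed

locale so2n_braiding =
  fixes p :: "nat \<Rightarrow> nat \<Rightarrow> 'k::field" and q :: 'k and n :: nat
  assumes q_nz: "q \<noteq> 0" and q_neq: "q \<noteq> -1" and n3: "n \<ge> 3"
    and p_diag: "\<And>i. 1 \<le> i \<Longrightarrow> i \<le> n \<Longrightarrow> p i i = q"
    and p_adj: "\<And>i. 1 < i \<Longrightarrow> i < n \<Longrightarrow> p i (i-1) * p (i-1) i = inverse q"
    and p_far: "\<And>i j. 1 \<le> i \<Longrightarrow> i + 1 < j \<Longrightarrow> j \<le> n \<Longrightarrow> \<not> (i = n-2 \<and> j = n)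
                  \<Longrightarrow> p i j * p j i = 1"
    and p_nz: "\<And>i j. p i j \<noteq> 0"
begin

abbreviation U_ideal :: "'k falg set" where
  "U_ideal \<equiv> tideal (so_rels p n)"

lemma serre_right_in_U_ideal:
  "1 \<le> i \<Longrightarrow> i \<le> n-2 \<Longrightarrow> xeval p (Nd (Nd (Lf i) (Lf (i+1))) (Lf (i+1))) \<in> U_ideal"
  unfolding so_rels_def by (intro tideal.gen_in) blast

lemma serre_left_in_U_ideal:
  "1 \<le> i \<Longrightarrow> i \<le> n-2 \<Longrightarrow> xeval p (Nd (Lf i) (Nd (Lf i) (Lf (i+1)))) \<in> U_ideal"
  unfolding so_rels_def by (intro tideal.gen_in) blast

lemma commutator_in_U_ideal:
  assumes "1 \<le> i" "i + 1 < j" "j \<le> n-1"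
  shows "xeval p (Nd (Lf i) (Lf j)) \<in> U_ideal"
proof -
  have "i < j" using assms(2) by simp
  with assms show ?thesis unfolding so_rels_def by (intro tideal.gen_in) blast
qed

lemma commutator_n_in_U_ideal:
  "1 \<le> i \<Longrightarrow> i \<le> n-3 \<Longrightarrow> xeval p (Nd (Lf i) (Lf n)) \<in> U_ideal"
  unfolding so_rels_def by (intro tideal.gen_in) blast

lemma commutator_swap_in_U_ideal:
  assumes "1 \<le> i" "i + 1 < j" "j \<le> n-1"
  shows "xeval p (Nd (Lf j) (Lf i)) \<in> U_ideal"
proof -
  have "p i j * p j i = 1" using assms by (intro p_far) auto
  then have "pp p [j] [i] * pp p [i] [j] = 1" by (simp add: mult.commute)
  then show ?thesis
    using commutator_in_U_ideal[OF assms] by (simp add: skew_bracket_in_tideal_swap)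
qed

lemma triple_bracket_in_U_ideal:
  assumes "2 \<le> i" "i \<le> n-2"
  shows "xeval p (Nd (Lf i) (Nd (Lf (i+1)) (Nd (Lf i) (Lf (i-1))))) \<in> U_ideal"
proof (rule triple_bracket_in_tideal[where q = q])
  show "1 + q \<noteq> 0" using q_neq by (metis add.commute add_eq_0_iff)
  show "p (i-1) (i-1) = q" using assms by (intro p_diag) arith+
  show "p i i = q" using assms by (intro p_diag) arith+
  show "p (i+1) (i+1) = q" using assms by (intro p_diag) arith+
  show "p i (i-1) * p (i-1) i = inverse q" using assms by (intro p_adj) auto
  show "p (i+1) i * p i (i+1) = inverse q" using assms p_adj[of "i+1"] by simp
  show "p (i-1) (i+1) * p (i+1) (i-1) = 1" using assms by (intro p_far) arith+
  show "xeval p (Nd (Nd (Lf (i-1)) (Lf i)) (Lf i)) \<in> U_ideal"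
    using assms serre_right_in_U_ideal[of "i-1"] by simp
  show "xeval p (Nd (Lf i) (Nd (Lf i) (Lf (i+1)))) \<in> U_ideal"
    using assms by (intro serre_left_in_U_ideal) auto
  show "xeval p (Nd (Lf (i-1)) (Lf (i+1))) \<in> U_ideal"
    using assms by (intro commutator_in_U_ideal) auto
  show "i - 1 \<noteq> i" "i \<noteq> i + 1" "i - 1 \<noteq> i + 1" "q \<noteq> 0"
    and "p (i-1) i \<noteq> 0" "p i (i+1) \<noteq> 0" "p (i-1) (i+1) \<noteq> 0"
    using assms q_nz p_nz by auto
qed

lemma skew_commute_lower_letters:
  assumes "x \<le> n - 1" and "\<forall>y\<in>set (leaves t). 1 \<le> y \<and> y + 1 < x"
  shows "skew_bracket p [x] (leaves t) (gen x) (xeval p t) \<in> U_ideal"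
proof -
  have "skew_bracket p [x] (bdeg (\<lambda>i. [i]) t) (gen x) (xeval p t) \<in> U_ideal"
    using assms
    by (intro skew_bracket_beval_in_tideal) (auto intro: commutator_swap_in_U_ideal[simplified])
  then show ?thesis by simp
qed

lemma skew_commute_desc_word_base:
  assumes "1 \<le> l" "l < i" "i \<le> n-2"
  shows "skew_bracket p [i] (leaves (desc_word l (i+1))) (gen i) (xeval p (desc_word l (i+1)))
           \<in> U_ideal"
proof -
  have word: "desc_word l (i+1) = Nd (Lf (i+1)) (Nd (Lf i) (desc_word l (i-1)))"
    using assms desc_word_Suc[of l i] desc_word_Suc[of l "i-1"] by simp
  show ?thesis
  proof (cases "l = i - 1")
    case True
    then have "desc_word l (i-1) = Lf (i-1)" by (simp add: desc_word_self)
    then show ?thesis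
      unfolding word using triple_bracket_in_U_ideal[of i] assms by simp
  next
    case False
    define z where "z = desc_word l (i-2)"
    have "desc_word l (i-1) = Nd (Lf (i-1)) z"
      using assms False desc_word_Suc[of l "i-2"] by (simp add: z_def Suc_diff_Suc numeral_2_eq_2)
    then have leaves_word: "leaves (desc_word l (i+1)) = [i+1] @ [i] @ [i-1] @ leaves z"
      and eval_word: "xeval p (desc_word l (i+1)) = skew_bracket p [i+1] ([i] @ [i-1] @ leaves z)
        (gen (i+1)) (skew_bracket p [i] ([i-1] @ leaves z) (gen i)
          (skew_bracket p [i-1] (leaves z) (gen (i-1)) (xeval p z)))"
      by (simp_all only: word beval_Nd_skew_bracket bdeg_letters leaves.simps beval.simps(1)
          append.simps)
    have "\<forall>y\<in>set (leaves z). 1 \<le> y \<and> y + 2 \<le> i"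
      using assms False by (auto simp: z_def leaves_desc_word)
    then have "skew_bracket p [i] (leaves z) (gen i) (xeval p z) \<in> U_ideal"
      "skew_bracket p [i+1] (leaves z) (gen (i+1)) (xeval p z) \<in> U_ideal"
      using assms by (auto intro!: skew_commute_lower_letters)
    moreover have "xeval p (Nd (Lf i) (Nd (Lf (i+1)) (Nd (Lf i) (Lf (i-1))))) \<in> U_ideal"
      using assms by (intro triple_bracket_in_U_ideal) auto
    then have "skew_bracket p [i] ([i+1] @ [i] @ [i-1]) (gen i) (skew_bracket p [i+1] ([i] @ [i-1])
        (gen (i+1)) (skew_bracket p [i] [i-1] (gen i) (gen (i-1)))) \<in> U_ideal"
      by (simp only: beval_Nd_skew_bracket bdeg_letters leaves.simps beval.simps(1) append.simps)
    ultimately show ?thesis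
      unfolding leaves_word eval_word by (rule nested_bracket_extend)
  qed
qed

lemma skew_commute_desc_word:
  assumes "1 \<le> l" "l < i" "i \<le> n-2" "i + 1 \<le> j" "j \<le> n - 1"
  shows "skew_bracket p [i] (leaves (desc_word l j)) (gen i) (xeval p (desc_word l j)) \<in> U_ideal"
  using assms(4,5)
proof (induction j rule: dec_induct)
  case base
  show ?case using skew_commute_desc_word_base[OF assms(1-3)] .
next
  case (step j')
  have IH: "skew_bracket p [i] (leaves (desc_word l j')) (gen i) (xeval p (desc_word l j')) \<in> U_ideal"
    using step by simp
  have "skew_bracket p [i] [Suc j'] (gen i) (gen (Suc j')) \<in> U_ideal"
    using step assms commutator_in_U_ideal[of i "Suc j'"] by simp
  then have "skew_bracket p [i] ([Suc j'] @ leaves (desc_word l j')) (gen i)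
      (skew_bracket p [Suc j'] (leaves (desc_word l j')) (gen (Suc j')) (xeval p (desc_word l j')))
      \<in> U_ideal"
    using IH by (rule skew_bracket_right_bracket_in_tideal)
  moreover have "desc_word l (Suc j') = Nd (Lf (Suc j')) (desc_word l j')"
    using step.hyps assms by (intro desc_word_Suc) linarith
  ultimately show ?case by simp
qed

lemma far_related_the_seq:
  assumes "1 \<le> k" "k < n" "2*n - m < k" "n + 1 < m" "m < 2*n"
  shows "far_related (skew_commute_mod p (atom_val p n m) (atom_deg n m) (so_rels p n)) (the_seq n k)"
proof (rule far_related_of_rank)
  (* the rank of an atom is its position; x_n occupies the slot of x_{n-1} *)
  let ?rank = "\<lambda>a. case a of Some i \<Rightarrow> min i (n-1) | None \<Rightarrow> n"
  have "map ?rank (map Some [k..<n-1]) = [k..<n-1]"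
    by (auto simp: comp_def intro!: map_idI)
  moreover have "[k..<n-1] @ [n-1, n] = [k..<Suc n]"
  proof -
    obtain n' where "n = Suc n'" using assms(2) by (cases n) auto
    with assms(2) show ?thesis by simp
  qed
  ultimately show "map ?rank (the_seq n k) = [k..<k + length (the_seq n k)]"
    using assms(2) by (simp add: the_seq_def)
next
  fix x y assume xy: "x \<in> set (the_seq n k)" "y \<in> set (the_seq n k)"
    and rank: "(case x of Some i \<Rightarrow> min i (n-1) | None \<Rightarrow> n) + 1
               < (case y of Some i \<Rightarrow> min i (n-1) | None \<Rightarrow> n)"
  have rank_le: "(case a of Some i \<Rightarrow> min i (n-1) | None \<Rightarrow> n) \<le> n" for a
    by (auto split: option.split)
  from xy(1) rank rank_le[of y] obtain i where x: "x = Some i" "k \<le> i" "i \<le> n - 2"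
    by (auto simp: the_seq_def)
  from xy(2) consider (letter) j where "y = Some j" "j < n - 1" | (xn) "y = Some n" | (ym) "y = None"
    by (auto simp: the_seq_def)
  then show "skew_commute_mod p (atom_val p n m) (atom_deg n m) (so_rels p n) x y"
  proof cases
    case letter
    then show ?thesis
      using x rank assms commutator_in_U_ideal[of i j]
      by (simp add: skew_commute_mod_def)
  next
    case xn
    then show ?thesis
      using x rank assms commutator_n_in_U_ideal[of i]
      by (simp add: skew_commute_mod_def)
  next
    case ym
    then show ?thesis
      using x rank assms skew_commute_desc_word[of "2*n-m" i "n-1"]
      by (simp add: skew_commute_mod_def atom_val_def ym_eq_desc_word atom_deg_ym)
  qed
qed

end

theorem lemma6p5:
  fixes q :: "'k::field"
    and g :: "nat \<Rightarrow> 'g::ab_group_add"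
    and chi :: "nat \<Rightarrow> 'g \<Rightarrow> 'k"
    and p :: "nat \<Rightarrow> nat \<Rightarrow> 'k"
    and n k m :: nat
  assumes chi_hom: "\<And>i a b. chi i (a + b) = chi i a * chi i b"
    and chi_nz: "\<And>i a. chi i a \<noteq> 0"
    and p_def: "\<And>i j. p i j = chi i (g j)"
    and q_nz: "q \<noteq> 0" and q_neq: "q \<noteq> -1"
    and n3: "n \<ge> 3"
    and pii: "\<And>i. 1 \<le> i \<Longrightarrow> i \<le> n \<Longrightarrow> p i i = q"
    and padj: "\<And>i. 1 < i \<Longrightarrow> i < n \<Longrightarrow> p i (i-1) * p (i-1) i = inverse q"
    and pn2: "p (n-2) n * p n (n-2) = inverse q"
    and pn1: "p (n-1) n * p n (n-1) = 1"
    and pother: "\<And>i j. 1 \<le> i \<Longrightarrow> i + 1 < j \<Longrightarrow> j \<le> n \<Longrightarrow> \<not> (i = n-2 \<and> j = n)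
                  \<Longrightarrow> p i j * p j i = 1"
    and k1: "1 \<le> k" and kn: "k < n"
    and m_lo: "phi n k < m" and m_hi: "m < 2*n"
  shows "\<forall>t1 t2. leaves t1 = the_seq n k \<longrightarrow> leaves t2 = the_seq n k \<longrightarrow>
           Ueq p n (beval p (atom_val p n m) (atom_deg n m) t1)
                   (beval p (atom_val p n m) (atom_deg n m) t2)"
proof (intro allI impI)
  fix t1 t2
  assume t1: "leaves t1 = the_seq n k" and t2: "leaves t2 = the_seq n k"
  interpret so2n_braiding p q n
    using q_nz q_neq n3 pii padj pother chi_nz by unfold_locales (simp_all add: p_def)
  have "2*n - m < k" and "n + 1 < m"
    using m_lo m_hi kn unfolding phi_def by arith+
  then show "Ueq p n (beval p (atom_val p n m) (atom_deg n m) t1)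
                     (beval p (atom_val p n m) (atom_deg n m) t2)"
    unfolding Ueq_def
    by (intro beval_bracketing_independent[OF t1 t2] far_related_the_seq k1 kn m_hi)
qed

end
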